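(* Let \[ f(x):=(x-r)\prod_{j=2}^n(x-x_j)=x^n+a_1x^{n-1}+a_2x^{n-2}+\cdots+a_n \] be a real polynomial, where $r>0$ and $x_2,\ldots,x_n$ are nonzero complex numbers such that $\mathrm{Re}(x_j)\le0$ for all $j\in\{2,\ldots,n\}$ and $\mathrm{Re}(x_j)<0$ for some $j\in\{2,\ldots,n\}$. Assume that $\prod_{j=2}^n(x-x_j)$ is not of the form $(x+\mu)\prod_{j=1}^m(x^2+\beta_j^2)$ with $\mu,\beta_1,\ldots,\beta_m>0$ (where $n-1=2m+1$). Then for each $k\in\{1,2,\ldots,n-2\}$, $a_k\le0$ implies $a_{k+2}<0$. *)

theory Defs
  imports Complex_Main "HOL-Computational_Algebra.Polynomial"
begin

end

theory Submission
  imports Defs "HOL-Computational_Algebra.Fundamental_Theorem_Algebra"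
begin

(* Write f = (x - r) G, so that the coefficient of x^i in f is g_(i-1) - r g_i, where g_i are the
   coefficients of the monic real polynomial G, whose roots lie in the closed left half-plane and
   avoid 0. The claim then follows from g_i > 0 and g_u g_(u+3) < g_(u+1) g_(u+2).
   Both are obtained by building G from its real factors x + a and x^2 + b x + c (a, c > 0, b >= 0):
   multiplication by such a factor preserves the inequalities g_u g_(u+d+e) <= g_(u+d) g_(u+e)
   for d >= 1 and even e >= 2, their strictness for d = e = 2 around every positive coefficient, and
   the absence of two consecutive vanishing coefficients below the leading one. Strictness of the
   final inequality needs a root of negative real part; when the only such roots come from a single
   real factor x + mu, the remaining factors must not all be of the form x^2 + beta^2, and this is
   exactly the excluded form. *)

lemma map_poly_of_real_add:
  "map_poly of_real (p + q) = (map_poly of_real p + map_poly of_real q :: 'a::real_algebra_1 poly)"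
  by (intro poly_eqI) (simp add: coeff_map_poly)

lemma map_poly_of_real_mult:
  "map_poly of_real (p * q)
     = (map_poly of_real p * map_poly of_real q :: 'a::{real_algebra_1,comm_ring_1} poly)"
  by (induction p) (simp_all add: map_poly_pCons map_poly_smult map_poly_of_real_add)

lemma map_poly_of_real_prod:
  "map_poly of_real (\<Prod>i\<in>A. f i) = (\<Prod>i\<in>A. map_poly of_real (f i) :: 'a::{real_algebra_1,comm_ring_1} poly)"
  by (induction A rule: infinite_finite_induct) (simp_all add: map_poly_of_real_mult)

lemma poly_map_poly_of_real:
  "poly (map_poly of_real p) (of_real x :: 'a::{real_algebra_1,comm_ring_1}) = of_real (poly p x)"
  by (induction p) (simp_all add: map_poly_pCons)

lemma degree_map_poly_of_real [simp]:
  "degree (map_poly (of_real :: real \<Rightarrow> 'a::real_algebra_1) p) = degree p"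
  by (simp add: degree_map_poly)

lemma coeff_map_poly_of_real [simp]:
  "coeff (map_poly (of_real :: real \<Rightarrow> 'a::real_algebra_1) p) n = of_real (coeff p n)"
  by (simp add: coeff_map_poly)

lemma real_poly_complex_root:
  fixes p :: "real poly"
  assumes "0 < degree p"
  obtains z :: complex where "poly (map_poly of_real p) z = 0"
  using assms fundamental_theorem_of_algebra[of "map_poly of_real p"] constant_degree
  by (metis degree_map_poly_of_real less_numeral_extra(3))

lemma real_poly_quadratic_factor:
  fixes p :: "real poly"
  assumes root: "poly (map_poly of_real p) z = 0" and nonreal: "Im z \<noteq> 0"
  shows "[:(Re z)\<^sup>2 + (Im z)\<^sup>2, -2 * Re z, 1:] dvd p"
proof -
  define Q where "Q = [:(Re z)\<^sup>2 + (Im z)\<^sup>2, -2 * Re z, 1:]"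
  define R where "R = p mod Q"
  have "degree R < 2"
    using degree_mod_less[of Q p] unfolding R_def Q_def by auto
  then have R: "R = [:coeff R 0, coeff R 1:]"
    by (intro poly_eqI) (auto simp: coeff_pCons coeff_eq_0 split: nat.split)
  have "poly (map_poly of_real Q) z = 0"
    unfolding Q_def by (simp add: map_poly_pCons complex_eq_iff power2_eq_square algebra_simps)
  moreover have "p = Q * (p div Q) + R"
    unfolding R_def by simp
  then have "poly (map_poly of_real p) z
               = poly (map_poly of_real Q) z * poly (map_poly of_real (p div Q)) z
                 + poly (map_poly of_real R) z"
    by (metis map_poly_of_real_add map_poly_of_real_mult poly_add poly_mult)
  ultimately have "of_real (coeff R 0) + of_real (coeff R 1) * z = 0"
    using root by (subst (asm) R) (simp add: map_poly_pCons mult.commute)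
  then have "coeff R 0 = 0" "coeff R 1 = 0"
    using nonreal by (auto simp: complex_eq_iff)
  then have "R = 0"
    using R by simp
  then show ?thesis
    unfolding Q_def R_def by (simp add: mod_eq_0_iff_dvd)
qed

lemma monic_factor_mult:
  fixes q h :: "'a::idom poly"
  assumes q: "lead_coeff q = 1" and qh: "q * h \<noteq> 0"
  shows "degree (q * h) = degree q + degree h" "lead_coeff (q * h) = lead_coeff h"
proof -
  show "degree (q * h) = degree q + degree h"
    using qh by (simp add: degree_mult_eq)
  show "lead_coeff (q * h) = lead_coeff h"
    using q by (simp add: lead_coeff_mult)
qed

lemma monic_degree_0: "degree p = 0 \<Longrightarrow> lead_coeff p = 1 \<Longrightarrow> p = 1"
  by (metis degree_0_id one_pCons)

lemma degree_prod_monic_quadratics: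
  "degree (\<Prod>i\<in>A. [:c i, b i, 1:] :: 'a::idom poly) = 2 * card A"
  by (cases "finite A") (simp_all add: degree_prod_eq_sum_degree)

definition cross_diff :: "(int \<Rightarrow> real) \<Rightarrow> int \<Rightarrow> int \<Rightarrow> int \<Rightarrow> real" where
  "cross_diff B u d e = B (u + d) * B (u + e) - B u * B (u + d + e)"

definition mixed_cross_diff :: "(int \<Rightarrow> real) \<Rightarrow> int \<Rightarrow> int \<Rightarrow> int \<Rightarrow> int \<Rightarrow> real" where
  "mixed_cross_diff B s v d e =
     B (v + d) * B (v + e - s) + B (v + d - s) * B (v + e)
     - B v * B (v + d + e - s) - B (v - s) * B (v + d + e)"

definition conv_quadratic :: "real \<Rightarrow> real \<Rightarrow> real \<Rightarrow> (int \<Rightarrow> real) \<Rightarrow> int \<Rightarrow> real" where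
  "conv_quadratic w0 w1 w2 B j = w0 * B j + w1 * B (j - 1) + w2 * B (j - 2)"

lemma cross_diff_conv_quadratic:
  "cross_diff (conv_quadratic w0 w1 w2 B) u d e =
     w0\<^sup>2 * cross_diff B u d e + w1\<^sup>2 * cross_diff B (u - 1) d e + w2\<^sup>2 * cross_diff B (u - 2) d e
     + w0 * w1 * mixed_cross_diff B 1 u d e + w1 * w2 * mixed_cross_diff B 1 (u - 1) d e
     + w0 * w2 * mixed_cross_diff B 2 u d e"
  unfolding cross_diff_def mixed_cross_diff_def conv_quadratic_def
  by (simp add: algebra_simps power2_eq_square)

definition even_gap_log_concave :: "(int \<Rightarrow> real) \<Rightarrow> bool" where
  "even_gap_log_concave B \<longleftrightarrow> (\<forall>u d e. 1 \<le> d \<longrightarrow> 2 \<le> e \<longrightarrow> even e \<longrightarrow> 0 \<le> cross_diff B u d e)"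

lemma mixed_cross_diff_nonneg:
  assumes B: "even_gap_log_concave B" and s: "s \<in> {1, 2}"
    and d: "1 \<le> d" and e: "2 \<le> e" "even e"
  shows "0 \<le> mixed_cross_diff B s v d e"
proof -
  have cd: "0 \<le> cross_diff B u d' e'" if "1 \<le> d'" "2 \<le> e'" "even e'" for u d' e'
    using B that unfolding even_gap_log_concave_def by blast
  consider "s < d" | "s = d" | "s = 2" "d = 1"
    using s d by fastforce
  then show ?thesis
  proof cases
    case 1
    have "mixed_cross_diff B s v d e = cross_diff B (v - s) (d + s) e + cross_diff B v (d - s) e"
      unfolding mixed_cross_diff_def cross_diff_def by (simp add: algebra_simps)
    then show ?thesis
      using cd[of "d + s" e "v - s"] cd[of "d - s" e v] 1 s e by fastforce
  next
    case 2
    have "mixed_cross_diff B s v d e = cross_diff B (v - s) (d + s) e"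
      unfolding mixed_cross_diff_def cross_diff_def 2 by (simp add: algebra_simps)
    then show ?thesis
      using cd[of "d + s" e "v - s"] 2 s e by fastforce
  next
    case 3 \<comment> \<open>regroup with gaps \<open>e + 2\<close> and \<open>e - 2\<close>; the latter is admissible
      (or the pair cancels) only because \<open>e\<close> is even\<close>
    have "mixed_cross_diff B s v d e
            = cross_diff B (v - 2) 1 (e + 2) + (B (v + 1) * B (v + e - 2) - B v * B (v + e - 1))"
      unfolding mixed_cross_diff_def cross_diff_def 3 by (simp add: algebra_simps)
    moreover have "0 \<le> B (v + 1) * B (v + e - 2) - B v * B (v + e - 1)"
    proof (cases "e = 2")
      case False
      then have "2 \<le> e - 2" "even (e - 2)"
        using e by presburger+
      then have "0 \<le> cross_diff B v 1 (e - 2)"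
        using cd by simp
      then show ?thesis
        unfolding cross_diff_def by (simp add: algebra_simps)
    qed (simp add: add.commute)
    ultimately show ?thesis
      using cd[of 1 "e + 2" "v - 2"] e by simp
  qed
qed

lemma even_gap_log_concave_conv_quadratic:
  assumes B: "even_gap_log_concave B" and w: "0 \<le> w0" "0 \<le> w1" "0 \<le> w2"
  shows "even_gap_log_concave (conv_quadratic w0 w1 w2 B)"
  unfolding even_gap_log_concave_def
proof (intro allI impI)
  fix u d e :: int
  assume de: "1 \<le> d" "2 \<le> e" "even e"
  have "0 \<le> cross_diff B u' d e" for u'
    using B de unfolding even_gap_log_concave_def by blast
  moreover have "0 \<le> mixed_cross_diff B s u' d e" if "s \<in> {1, 2}" for s u'
    using mixed_cross_diff_nonneg[OF B that de] .
  ultimately show "0 \<le> cross_diff (conv_quadratic w0 w1 w2 B) u d e"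
    unfolding cross_diff_conv_quadratic using w by (simp add: add_nonneg_nonneg mult_nonneg_nonneg)
qed

definition strict_two_step_log_concave :: "(int \<Rightarrow> real) \<Rightarrow> bool" where
  "strict_two_step_log_concave B \<longleftrightarrow> (\<forall>j. 0 < B j \<longrightarrow> 0 < cross_diff B (j - 2) 2 2)"

lemma strict_two_step_log_concave_conv_quadratic:
  assumes egl: "even_gap_log_concave B" and strict: "strict_two_step_log_concave B"
    and nonneg: "\<forall>j. 0 \<le> B j" and w: "0 \<le> w0" "0 \<le> w1" "0 \<le> w2"
  shows "strict_two_step_log_concave (conv_quadratic w0 w1 w2 B)"
  unfolding strict_two_step_log_concave_def
proof (intro allI impI)
  fix j
  assume "0 < conv_quadratic w0 w1 w2 B j"
  then have "0 < w0 * B j \<or> 0 < w1 * B (j - 1) \<or> 0 < w2 * B (j - 2)"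
    unfolding conv_quadratic_def by linarith
  moreover have diag_pos: "0 < w\<^sup>2 * cross_diff B (i - 2) 2 2" if "0 \<le> w" "0 < w * B i" for w i
  proof -
    have "0 < w" "0 < B i"
      using that nonneg[rule_format, of i] by (auto simp: zero_less_mult_iff)
    then show ?thesis
      using strict unfolding strict_two_step_log_concave_def by simp
  qed
  ultimately have "0 < w0\<^sup>2 * cross_diff B (j - 2) 2 2 \<or> 0 < w1\<^sup>2 * cross_diff B (j - 2 - 1) 2 2
      \<or> 0 < w2\<^sup>2 * cross_diff B (j - 2 - 2) 2 2"
    using diag_pos[of w0 j] diag_pos[of w1 "j - 1"] diag_pos[of w2 "j - 2"] w
    by (auto simp: algebra_simps)
  moreover have "0 \<le> w0\<^sup>2 * cross_diff B (j - 2) 2 2" "0 \<le> w1\<^sup>2 * cross_diff B (j - 2 - 1) 2 2"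
    "0 \<le> w2\<^sup>2 * cross_diff B (j - 2 - 2) 2 2"
    using egl unfolding even_gap_log_concave_def by simp_all
  moreover have "0 \<le> w0 * w1 * mixed_cross_diff B 1 (j - 2) 2 2"
    "0 \<le> w1 * w2 * mixed_cross_diff B 1 (j - 2 - 1) 2 2" "0 \<le> w0 * w2 * mixed_cross_diff B 2 (j - 2) 2 2"
    using mixed_cross_diff_nonneg[OF egl, of _ 2 2] w by simp_all
  ultimately show "0 < cross_diff (conv_quadratic w0 w1 w2 B) (j - 2) 2 2"
    unfolding cross_diff_conv_quadratic by linarith
qed

definition zero_pair_is_tail :: "(int \<Rightarrow> real) \<Rightarrow> bool" where
  "zero_pair_is_tail B \<longleftrightarrow> (\<forall>j \<ge> 0. B j = 0 \<longrightarrow> B (j + 1) = 0 \<longrightarrow> (\<forall>k \<ge> j. B k = 0))"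

lemma zero_pair_is_tail_conv_quadratic:
  assumes tail: "zero_pair_is_tail B" and nonneg: "\<forall>j. 0 \<le> B j"
    and w: "0 < w0" "0 \<le> w1" "0 \<le> w2"
  shows "zero_pair_is_tail (conv_quadratic w0 w1 w2 B)"
  unfolding zero_pair_is_tail_def
proof (intro allI impI)
  fix j k :: int
  assume j: "0 \<le> j" and k: "j \<le> k"
    and c0: "conv_quadratic w0 w1 w2 B j = 0" and c1: "conv_quadratic w0 w1 w2 B (j + 1) = 0"
  have terms: "0 \<le> w0 * B i" "0 \<le> w1 * B i" "0 \<le> w2 * B i" for i
    using nonneg w by simp_all
  have "w0 * B j = 0" "w0 * B (j + 1) = 0"
    using c0 c1 terms[of j] terms[of "j - 1"] terms[of "j - 2"] terms[of "j + 1"]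
    unfolding conv_quadratic_def by (simp_all add: add_nonneg_eq_0_iff)
  then have "B j = 0" "B (j + 1) = 0"
    using w by simp_all
  then have zero: "B i = 0" if "j \<le> i" for i
    using tail j that unfolding zero_pair_is_tail_def by blast
  consider "k = j" | "k = j + 1" | "j \<le> k - 2"
    using k by linarith
  then show "conv_quadratic w0 w1 w2 B k = 0"
  proof cases
    case 3
    then show ?thesis
      using zero[of k] zero[of "k - 1"] zero[of "k - 2"] unfolding conv_quadratic_def by simp
  qed (use c0 c1 in simp_all)
qed

definition semistable_coeff_seq :: "(int \<Rightarrow> real) \<Rightarrow> bool" where
  "semistable_coeff_seq B \<longleftrightarrow>
     even_gap_log_concave B \<and> strict_two_step_log_concave B \<and> (\<forall>j. 0 \<le> B j) \<and>
     zero_pair_is_tail B \<and> 0 < B 0"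

lemma semistable_coeff_seq_conv_quadratic:
  assumes B: "semistable_coeff_seq B" and w: "0 < w0" "0 \<le> w1" "0 \<le> w2"
  shows "semistable_coeff_seq (conv_quadratic w0 w1 w2 B)"
proof -
  have nonneg: "\<forall>j. 0 \<le> B j" and "0 < B 0"
    using B unfolding semistable_coeff_seq_def by blast+
  then have "0 < conv_quadratic w0 w1 w2 B 0"
    using w unfolding conv_quadratic_def by (simp add: add_pos_nonneg)
  moreover have "\<forall>j. 0 \<le> conv_quadratic w0 w1 w2 B j"
    using nonneg w unfolding conv_quadratic_def by simp
  ultimately show ?thesis
    using B w even_gap_log_concave_conv_quadratic strict_two_step_log_concave_conv_quadratic
      zero_pair_is_tail_conv_quadratic
    unfolding semistable_coeff_seq_def by simp
qed

lemma semistable_coeff_seq_pair_pos: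
  assumes B: "semistable_coeff_seq B" and u: "0 \<le> u" "u \<le> n" and top: "0 < B n"
  shows "0 < B u \<or> 0 < B (u + 1)"
proof (rule ccontr)
  assume "\<not> ?thesis"
  then have "B u = 0" "B (u + 1) = 0"
    using B unfolding semistable_coeff_seq_def by (simp_all add: order.antisym)
  then have "B n = 0"
    using B u unfolding semistable_coeff_seq_def zero_pair_is_tail_def by blast
  with top show False
    by simp
qed

lemma conv_quadratic_pos:
  assumes B: "semistable_coeff_seq B" and w: "0 < w0" "0 < w1" "0 \<le> w2"
    and j: "0 \<le> j" "j \<le> n + 1" and top: "0 < B n"
  shows "0 < conv_quadratic w0 w1 w2 B j"
proof -
  have nonneg: "0 \<le> B i" for i
    using B unfolding semistable_coeff_seq_def by blast
  have "0 < B j \<or> 0 < B (j - 1)"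
  proof (cases "j = 0")
    case True
    then show ?thesis
      using B unfolding semistable_coeff_seq_def by simp
  next
    case False
    then show ?thesis
      using semistable_coeff_seq_pair_pos[OF B, of "j - 1" n] j top by auto
  qed
  then have "0 < w0 * B j + w1 * B (j - 1)"
    using w nonneg[of j] nonneg[of "j - 1"] by (auto intro: add_pos_nonneg add_nonneg_pos)
  then show ?thesis
    using w nonneg[of "j - 2"] unfolding conv_quadratic_def by (simp add: add_pos_nonneg)
qed

lemma mixed_cross_diff_1_1_2: "mixed_cross_diff B 1 v 1 2 = cross_diff B (v - 1) 2 2"
  unfolding mixed_cross_diff_def cross_diff_def by (simp add: algebra_simps)

lemma cross_diff_conv_quadratic_pos:
  assumes B: "semistable_coeff_seq B" and w: "0 < w0" "0 < w1" "0 \<le> w2"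
    and pos: "0 < B (u + 1) \<or> 0 < w2 \<and> 0 < B u"
  shows "0 < cross_diff (conv_quadratic w0 w1 w2 B) u 1 2"
proof -
  have egl: "even_gap_log_concave B" and strict: "strict_two_step_log_concave B"
    using B unfolding semistable_coeff_seq_def by blast+
  have cd: "0 \<le> cross_diff B v d 2" if "1 \<le> d" for v d
    using egl that unfolding even_gap_log_concave_def by simp
  have "0 < w0 * w1 * cross_diff B (u - 1) 2 2 \<or> 0 < w1 * w2 * cross_diff B (u - 2) 2 2"
    using pos strict[unfolded strict_two_step_log_concave_def, rule_format, of "u + 1"]
      strict[unfolded strict_two_step_log_concave_def, rule_format, of u] w
    by (auto simp: algebra_simps)
  moreover have "0 \<le> w0 * w1 * cross_diff B (u - 1) 2 2" "0 \<le> w1 * w2 * cross_diff B (u - 2) 2 2"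
    "0 \<le> w0 * w2 * mixed_cross_diff B 2 u 1 2"
    using cd w mixed_cross_diff_nonneg[OF egl, of 2 1 2 u] by simp_all
  moreover have "0 \<le> w0\<^sup>2 * cross_diff B u 1 2" "0 \<le> w1\<^sup>2 * cross_diff B (u - 1) 1 2"
    "0 \<le> w2\<^sup>2 * cross_diff B (u - 2) 1 2"
    using cd by simp_all
  moreover have "cross_diff (conv_quadratic w0 w1 w2 B) u 1 2 =
      w0\<^sup>2 * cross_diff B u 1 2 + w1\<^sup>2 * cross_diff B (u - 1) 1 2 + w2\<^sup>2 * cross_diff B (u - 2) 1 2
      + w0 * w1 * cross_diff B (u - 1) 2 2 + w1 * w2 * cross_diff B (u - 2) 2 2
      + w0 * w2 * mixed_cross_diff B 2 u 1 2"
    unfolding cross_diff_conv_quadratic mixed_cross_diff_1_1_2 by (simp add: algebra_simps)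
  ultimately show ?thesis
    by linarith
qed

definition int_coeff :: "'a::zero poly \<Rightarrow> int \<Rightarrow> 'a" where
  "int_coeff p j = (if j < 0 then 0 else coeff p (nat j))"

lemma int_coeff_of_nat [simp]: "int_coeff p (int i) = coeff p i"
  by (simp add: int_coeff_def)

lemma int_coeff_quadratic_mult:
  "int_coeff ([:w0, w1, w2:] * h) = conv_quadratic w0 w1 w2 (int_coeff h)"
proof
  fix j :: int
  have mult: "[:w0, w1, w2:] * h = smult w0 h + pCons 0 (smult w1 h + pCons 0 (smult w2 h))"
    by (simp add: algebra_simps)
  show "int_coeff ([:w0, w1, w2:] * h) j = conv_quadratic w0 w1 w2 (int_coeff h) j"
  proof (cases "j < 2")
    case True
    then consider "j < 0" | "j = 0" | "j = 1"
      by linarith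
    then show ?thesis
      by cases (auto simp: mult int_coeff_def conv_quadratic_def)
  next
    case False
    then obtain m where "nat j = Suc (Suc m)" "nat (j - 1) = Suc m" "nat (j - 2) = m"
      by (intro that[of "nat (j - 2)"]) auto
    then show ?thesis
      using False by (simp add: mult int_coeff_def conv_quadratic_def)
  qed
qed

lemma int_coeff_linear_mult: "int_coeff ([:a, 1:] * h) = conv_quadratic a 1 0 (int_coeff h)"
  using int_coeff_quadratic_mult[of a 1 0 h] by simp

lemma int_coeff_cross_diff:
  "cross_diff (int_coeff p) (int u) 1 2 = coeff p (u + 1) * coeff p (u + 2) - coeff p u * coeff p (u + 3)"
  unfolding cross_diff_def int_coeff_def by (simp add: nat_add_distrib ac_simps)

lemma semistable_coeff_seq_1: "semistable_coeff_seq (int_coeff 1)"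
proof -
  have one: "int_coeff 1 = (\<lambda>j. if j = 0 then 1 else 0)"
    by (auto simp: int_coeff_def nat_eq_iff)
  show ?thesis
    unfolding semistable_coeff_seq_def even_gap_log_concave_def strict_two_step_log_concave_def
      zero_pair_is_tail_def cross_diff_def one
    by auto
qed

definition semistable :: "real poly \<Rightarrow> bool" where
  "semistable p \<longleftrightarrow> (\<forall>z. poly (map_poly of_real p) z = 0 \<longrightarrow> Re z \<le> 0 \<and> z \<noteq> 0)"

lemma semistable_nonzero: "semistable p \<Longrightarrow> p \<noteq> 0"
  unfolding semistable_def by (metis map_poly_0 poly_0)

lemma semistable_dvd: "semistable p \<Longrightarrow> h dvd p \<Longrightarrow> semistable h"
  unfolding semistable_def by (metis dvdE map_poly_of_real_mult mult_zero_left poly_mult)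

lemma semistable_factor:
  assumes p: "semistable p" and root: "poly (map_poly of_real p) z = 0"
  obtains (real) h where "semistable h" "lead_coeff h = lead_coeff p" "degree p = degree h + 1"
      "Im z = 0" "Re z < 0" "p = [:- Re z, 1:] * h"
    | (nonreal) h where "semistable h" "lead_coeff h = lead_coeff p" "degree p = degree h + 2"
      "Im z \<noteq> 0" "p = [:(Re z)\<^sup>2 + (Im z)\<^sup>2, -2 * Re z, 1:] * h"
proof -
  have factor: "semistable h \<and> lead_coeff h = lead_coeff p \<and> degree p = degree q + degree h"
    if "p = q * h" "lead_coeff q = 1" for q h
    using that semistable_dvd[OF p] monic_factor_mult[OF that(2)] semistable_nonzero[OF p]
    by simp
  show thesis
  proof (cases "Im z = 0")
    case True
    then have "z = of_real (Re z)"
      by (simp add: complex_eq_iff)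
    then have "poly p (Re z) = 0"
      using root poly_map_poly_of_real[of p "Re z", where 'a = complex] by simp
    then obtain h where h: "p = [:- Re z, 1:] * h"
      by (metis dvdE poly_eq_0_iff_dvd)
    have "Re z < 0"
      using p root True unfolding semistable_def by (auto simp: complex_eq_iff)
    then show thesis
      using real[OF _ _ _ True _ h] factor[OF h] by simp
  next
    case False
    then obtain h where h: "p = [:(Re z)\<^sup>2 + (Im z)\<^sup>2, -2 * Re z, 1:] * h"
      using real_poly_quadratic_factor[OF root] by (metis dvdE)
    then show thesis
      using nonreal[OF _ _ _ False h] factor[OF h] by simp
  qed
qed

lemma semistable_coeff_seq_int_coeff:
  assumes "semistable p" "lead_coeff p = 1"
  shows "semistable_coeff_seq (int_coeff p)"
  using assms
proof (induction "degree p" arbitrary: p rule: less_induct)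
  case less
  show ?case
  proof (cases "degree p = 0")
    case True
    then have "p = 1"
      using less.prems(2) by (rule monic_degree_0)
    then show ?thesis
      using semistable_coeff_seq_1 by simp
  next
    case False
    then obtain z :: complex where z: "poly (map_poly of_real p) z = 0"
      using real_poly_complex_root by blast
    have left: "Re z \<le> 0"
      using less.prems(1) z unfolding semistable_def by blast
    from less.prems(1) z show ?thesis
    proof (cases rule: semistable_factor)
      case (real h)
      have "semistable_coeff_seq (int_coeff h)"
        using less.hyps[of h] real(1-3) less.prems(2) by simp
      then show ?thesis
        unfolding real(6) int_coeff_linear_mult using real(5)
        by (intro semistable_coeff_seq_conv_quadratic) auto
    next
      case (nonreal h)
      have "semistable_coeff_seq (int_coeff h)"
        using less.hyps[of h] nonreal(1-3) less.prems(2) by simp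
      moreover have "0 < (Re z)\<^sup>2 + (Im z)\<^sup>2" "0 \<le> -2 * Re z"
        using nonreal(4) left by (simp_all add: add_nonneg_pos)
      ultimately show ?thesis
        unfolding nonreal(5) int_coeff_quadratic_mult
        by (intro semistable_coeff_seq_conv_quadratic) auto
    qed
  qed
qed

lemma semistable_coeff_pos:
  assumes p: "semistable p" "lead_coeff p = 1"
    and root: "poly (map_poly of_real p) z = 0" "Re z < 0" and i: "i \<le> degree p"
  shows "0 < coeff p i"
proof (cases "i = degree p")
  case True
  then show ?thesis
    using p(2) by simp
next
  case False
  from p(1) root(1) show ?thesis
  proof (cases rule: semistable_factor)
    case (real h)
    have "semistable_coeff_seq (int_coeff h)" "0 < int_coeff h (int (degree h))"
      using semistable_coeff_seq_int_coeff[of h] real(1,2) p(2) by simp_all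
    then have "0 < conv_quadratic (- Re z) 1 0 (int_coeff h) (int i)"
      using root(2) real(3) i False by (intro conv_quadratic_pos[where n = "int (degree h)"]) auto
    also have "conv_quadratic (- Re z) 1 0 (int_coeff h) (int i) = coeff p i"
      unfolding real(6) int_coeff_linear_mult[symmetric] by simp
    finally show ?thesis .
  next
    case (nonreal h)
    have "semistable_coeff_seq (int_coeff h)" "0 < int_coeff h (int (degree h))"
      using semistable_coeff_seq_int_coeff[of h] nonreal(1,2) p(2) by simp_all
    then have "0 < conv_quadratic ((Re z)\<^sup>2 + (Im z)\<^sup>2) (-2 * Re z) 1 (int_coeff h) (int i)"
      using root(2) nonreal(3,4) i False
      by (intro conv_quadratic_pos[where n = "int (degree h)"]) (auto simp: add_nonneg_pos)
    also have "conv_quadratic ((Re z)\<^sup>2 + (Im z)\<^sup>2) (-2 * Re z) 1 (int_coeff h) (int i) = coeff p i"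
      unfolding nonreal(5) int_coeff_quadratic_mult[symmetric] by simp
    finally show ?thesis .
  qed
qed

definition imaginary_quadratic_product :: "real poly \<Rightarrow> bool" where
  "imaginary_quadratic_product p \<longleftrightarrow>
     (\<exists>(m::nat) (\<beta>::nat \<Rightarrow> real). (\<forall>i\<in>{1..m}. 0 < \<beta> i) \<and> p = (\<Prod>i\<in>{1..m}. [:(\<beta> i)\<^sup>2, 0, 1:]))"

lemma imaginary_quadratic_product_1: "imaginary_quadratic_product 1"
  unfolding imaginary_quadratic_product_def by (intro exI[of _ 0]) simp

lemma imaginary_quadratic_product_mult:
  assumes h: "imaginary_quadratic_product h" and b: "0 < b"
  shows "imaginary_quadratic_product ([:b\<^sup>2, 0, 1:] * h)"
proof -
  obtain m :: nat and \<beta> where \<beta>: "\<forall>i\<in>{1..m}. 0 < \<beta> i"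
    and h: "h = (\<Prod>i\<in>{1..m}. [:(\<beta> i)\<^sup>2, 0, 1:])"
    using h unfolding imaginary_quadratic_product_def by blast
  define \<beta>' where "\<beta>' = \<beta>(Suc m := b)"
  have "(\<Prod>i\<in>{1..Suc m}. [:(\<beta>' i)\<^sup>2, 0, 1:])
          = [:b\<^sup>2, 0, 1:] * (\<Prod>i\<in>{1..m}. [:(\<beta>' i)\<^sup>2, 0, 1:])"
    by (simp add: prod.nat_ivl_Suc' \<beta>'_def)
  also have "(\<Prod>i\<in>{1..m}. [:(\<beta>' i)\<^sup>2, 0, 1:]) = h"
    unfolding h by (intro prod.cong) (auto simp: \<beta>'_def)
  finally show ?thesis
    using \<beta> b unfolding imaginary_quadratic_product_def
    by (intro exI[of _ "Suc m"] exI[of _ \<beta>']) (auto simp: \<beta>'_def)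
qed

lemma imaginary_quadratic_product_map_poly_of_real:
  assumes "imaginary_quadratic_product h"
  obtains m :: nat and \<beta> where "\<forall>i\<in>{1..m}. 0 < \<beta> i" "degree h = 2 * m"
    "map_poly of_real h = (\<Prod>i\<in>{1..m}. [:of_real ((\<beta> i)\<^sup>2), 0, 1:] :: 'a::{real_algebra_1,comm_ring_1} poly)"
proof -
  obtain m :: nat and \<beta> where \<beta>: "\<forall>i\<in>{1..m}. 0 < \<beta> i"
    and h: "h = (\<Prod>i\<in>{1..m}. [:(\<beta> i)\<^sup>2, 0, 1:])"
    using assms unfolding imaginary_quadratic_product_def by blast
  have "degree h = 2 * m"
    unfolding h degree_prod_monic_quadratics by simp
  moreover have "map_poly of_real h = (\<Prod>i\<in>{1..m}. [:of_real ((\<beta> i)\<^sup>2), 0, 1:] :: 'a poly)"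
    unfolding h map_poly_of_real_prod by (simp add: map_poly_pCons)
  ultimately show thesis
    using \<beta> that by blast
qed

lemma semistable_imaginary_quadratic_product:
  assumes "semistable p" "lead_coeff p = 1" "\<forall>z. poly (map_poly of_real p) z = 0 \<longrightarrow> Re z = 0"
  shows "imaginary_quadratic_product p"
  using assms
proof (induction "degree p" arbitrary: p rule: less_induct)
  case less
  show ?case
  proof (cases "degree p = 0")
    case True
    then have "p = 1"
      using less.prems(2) by (rule monic_degree_0)
    then show ?thesis
      using imaginary_quadratic_product_1 by simp
  next
    case False
    then obtain z :: complex where z: "poly (map_poly of_real p) z = 0"
      using real_poly_complex_root by blast
    then have imag: "Re z = 0"
      using less.prems(3) by blast
    from less.prems(1) z show ?thesis
    proof (cases rule: semistable_factor)
      case (real h)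
      then show ?thesis
        using imag by linarith
    next
      case (nonreal h)
      have "Re w = 0" if "poly (map_poly of_real h) w = 0" for w
      proof -
        have "poly (map_poly of_real p) w = 0"
          using that unfolding nonreal(5) map_poly_of_real_mult by simp
        then show ?thesis
          using less.prems(3) by blast
      qed
      then have "imaginary_quadratic_product h"
        using less.hyps[of h] nonreal(1-3) less.prems(2) by simp
      then have "imaginary_quadratic_product ([:\<bar>Im z\<bar>\<^sup>2, 0, 1:] * h)"
        using nonreal(4) by (intro imaginary_quadratic_product_mult) auto
      then show ?thesis
        using nonreal(5) imag by simp
    qed
  qed
qed

lemma semistable_coeff_cross_pos:
  assumes p: "semistable p" "lead_coeff p = 1"
    and root: "poly (map_poly of_real p) z = 0" "Re z < 0"
    and not_special: "\<nexists>a h. 0 < a \<and> imaginary_quadratic_product h \<and> p = [:a, 1:] * h"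
    and u: "u + 3 \<le> degree p"
  shows "coeff p u * coeff p (u + 3) < coeff p (u + 1) * coeff p (u + 2)"
proof -
  from p(1) root(1) have "0 < cross_diff (int_coeff p) (int u) 1 2"
  proof (cases rule: semistable_factor)
    case (real h)
    have B: "semistable_coeff_seq (int_coeff h)"
      using semistable_coeff_seq_int_coeff[of h] real(1,2) p(2) by simp
    have "0 < coeff h (u + 1)"
    proof (cases "\<exists>w. poly (map_poly of_real h) w = 0 \<and> Re w < 0")
      case True
      then obtain w where "poly (map_poly of_real h) w = 0" "Re w < 0"
        by blast
      then show ?thesis
        using semistable_coeff_pos[of h] real(1-3) p(2) u by simp
    next
      case False
      have "Re w = 0" if "poly (map_poly of_real h) w = 0" for w
        using False that real(1) unfolding semistable_def by force
      then have "imaginary_quadratic_product h"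
        using real(1,2) p(2) by (intro semistable_imaginary_quadratic_product) auto
      then show ?thesis
        using not_special real(5,6) by (metis neg_0_less_iff_less)
    qed
    then show ?thesis
      unfolding real(6) int_coeff_linear_mult
      using B root(2)
      by (intro cross_diff_conv_quadratic_pos) (auto simp: int_coeff_def nat_add_distrib)
  next
    case (nonreal h)
    have B: "semistable_coeff_seq (int_coeff h)"
      using semistable_coeff_seq_int_coeff[of h] nonreal(1,2) p(2) by simp
    then have "0 < int_coeff h (int u) \<or> 0 < int_coeff h (int u + 1)"
      using nonreal(2,3) p(2) u
      by (intro semistable_coeff_seq_pair_pos[where n = "int (degree h)"]) auto
    then show ?thesis
      unfolding nonreal(5) int_coeff_quadratic_mult
      using B root(2) nonreal(4)
      by (intro cross_diff_conv_quadratic_pos) (auto simp: add_nonneg_pos)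
  qed
  then show ?thesis
    unfolding int_coeff_cross_diff by simp
qed

lemma real_cofactor:
  fixes f :: "real poly" and g :: "'a::{real_algebra_1,idom} poly"
  assumes f: "map_poly of_real f = [:- of_real r, 1:] * g"
  obtains G where "f = [:- r, 1:] * G" "map_poly of_real G = g"
proof -
  have "of_real (poly f r) = poly (map_poly of_real f) (of_real r :: 'a)"
    by (simp add: poly_map_poly_of_real)
  also have "\<dots> = 0"
    unfolding f by simp
  finally obtain G where G: "f = [:- r, 1:] * G"
    by (metis dvdE of_real_eq_0_iff poly_eq_0_iff_dvd)
  have "map_poly of_real [:- r, 1:] = ([:- of_real r, 1:] :: 'a poly)"
    by (simp add: map_poly_pCons)
  then have "[:- of_real r, 1:] * map_poly of_real G = [:- of_real r, 1:] * g"
    using f unfolding G map_poly_of_real_mult by simp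
  then have "map_poly of_real G = g"
    by (subst (asm) mult_left_cancel) simp_all
  with G show thesis
    by (rule that)
qed

lemma monic_root_product:
  fixes G :: "real poly" and x :: "'b \<Rightarrow> complex"
  assumes G: "map_poly of_real G = (\<Prod>j\<in>A. [:- x j, 1:])" and A: "finite A"
  shows "lead_coeff G = 1" "degree G = card A"
    "poly (map_poly of_real G) z = 0 \<longleftrightarrow> (\<exists>j\<in>A. z = x j)"
proof -
  show "lead_coeff G = 1"
    using arg_cong[OF G, of lead_coeff] by (simp add: lead_coeff_prod)
  show "degree G = card A"
    using degree_map_poly_of_real[of G, where 'a = complex] A unfolding G
    by (simp add: degree_prod_eq_sum_degree)
  show "poly (map_poly of_real G) z = 0 \<longleftrightarrow> (\<exists>j\<in>A. z = x j)"
    unfolding G poly_prod using A by (simp add: prod_zero_iff)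
qed

lemma coeff_sign_propagation:
  fixes G :: "real poly"
  assumes r: "0 < r"
    and pos: "\<And>i. i \<le> degree G \<Longrightarrow> 0 < coeff G i"
    and cross: "\<And>u. u + 3 \<le> degree G \<Longrightarrow>
                  coeff G u * coeff G (u + 3) < coeff G (u + 1) * coeff G (u + 2)"
    and k: "1 \<le> k" "k < degree G"
    and nonpos: "coeff ([:- r, 1:] * G) (degree G + 1 - k) \<le> 0"
  shows "coeff ([:- r, 1:] * G) (degree G + 1 - (k + 2)) < 0"
proof (cases "k + 1 = degree G")
  case True
  then show ?thesis
    using pos[of 0] r by simp
next
  case False
  then obtain t where t: "degree G + 1 - k = Suc (t + 2)" "degree G + 1 - (k + 2) = Suc t"
    "t + 3 \<le> degree G"
    using k by (intro that[of "degree G - k - 2"]) auto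
  have coeff: "coeff ([:- r, 1:] * G) (Suc i) = coeff G i - r * coeff G (Suc i)" for i
    by simp
  have "coeff G (t + 2) \<le> r * coeff G (t + 3)"
    using nonpos unfolding t coeff by (simp add: numeral_3_eq_3)
  then have "coeff G (t + 1) * coeff G (t + 2) \<le> coeff G (t + 1) * (r * coeff G (t + 3))"
    using pos[of "t + 1"] t(3) by (intro mult_left_mono) auto
  with cross[OF t(3)] have "coeff G t * coeff G (t + 3) < (r * coeff G (t + 1)) * coeff G (t + 3)"
    by (simp add: algebra_simps)
  then have "coeff G t < r * coeff G (t + 1)"
    using pos[of "t + 3"] t(3) by simp
  then show ?thesis
    unfolding t coeff by simp
qed

theorem theorem4p5:
  fixes n :: nat and r :: real and x :: "nat \<Rightarrow> complex" and f :: "real poly"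
  assumes r_pos: "r > 0"
    and x_nz: "\<forall>j\<in>{2..n}. x j \<noteq> 0"
    and x_re_le: "\<forall>j\<in>{2..n}. Re (x j) \<le> 0"
    and x_re_lt: "\<exists>j\<in>{2..n}. Re (x j) < 0"
    and f_def: "map_poly complex_of_real f
                  = [:- complex_of_real r, 1:] * (\<Prod>j\<in>{2..n}. [:- x j, 1:])"
    and not_special: "\<not> (\<exists>(\<mu>::real) (m::nat) (\<beta>::nat \<Rightarrow> real).
                  \<mu> > 0 \<and> (\<forall>i\<in>{1..m}. \<beta> i > 0) \<and> n - 1 = 2 * m + 1 \<and>
                  (\<Prod>j\<in>{2..n}. [:- x j, 1:])
                    = [:complex_of_real \<mu>, 1:] *
                      (\<Prod>i\<in>{1..m}. [:complex_of_real ((\<beta> i)\<^sup>2), 0, 1:]))"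
    and k: "k \<in> {1..n-2}"
    and ak: "coeff f (n - k) \<le> 0"
  shows "coeff f (n - (k + 2)) < 0"
proof -
  define g where "g = (\<Prod>j\<in>{2..n}. [:- x j, 1:])"
  obtain G where fG: "f = [:- r, 1:] * G" and Gg: "map_poly of_real G = g"
    using real_cofactor f_def unfolding g_def by blast
  note G = monic_root_product[OF Gg[unfolded g_def] finite_atLeastAtMost]
  have semistable: "semistable G"
    using x_nz x_re_le unfolding semistable_def G(3) by auto
  obtain z where z: "poly (map_poly of_real G) z = 0" "Re z < 0"
    using x_re_lt G(3) by blast
  have deg: "degree G + 1 = n"
    using G(2) k by (cases n) auto
  have not_special_cofactor: "\<nexists>a h. 0 < a \<and> imaginary_quadratic_product h \<and> G = [:a, 1:] * h"
  proof (intro notI, elim exE conjE)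
    fix a h
    assume a: "0 < a" and "imaginary_quadratic_product h" and G_eq: "G = [:a, 1:] * h"
    then obtain m :: nat and \<beta> where "\<forall>i\<in>{1..m}. 0 < \<beta> i" "degree h = 2 * m"
      and h: "map_poly of_real h = (\<Prod>i\<in>{1..m}. [:of_real ((\<beta> i)\<^sup>2), 0, 1:] :: complex poly)"
      by (elim imaginary_quadratic_product_map_poly_of_real)
    moreover have "g = [:of_real a, 1:] * (\<Prod>i\<in>{1..m}. [:of_real ((\<beta> i)\<^sup>2), 0, 1:])"
      unfolding Gg[symmetric] G_eq map_poly_of_real_mult h by (simp add: map_poly_pCons)
    moreover have "degree G = degree [:a, 1:] + degree h"
      using semistable_nonzero[OF semistable] unfolding G_eq by (intro monic_factor_mult) simp_all
    then have "n - 1 = 2 * m + 1"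
      using deg \<open>degree h = 2 * m\<close> by simp
    ultimately show False
      using not_special a unfolding g_def by blast
  qed
  have "coeff ([:- r, 1:] * G) (degree G + 1 - (k + 2)) < 0"
    using k ak deg unfolding fG
    by (intro coeff_sign_propagation[OF r_pos semistable_coeff_pos[OF semistable G(1) z]
          semistable_coeff_cross_pos[OF semistable G(1) z not_special_cofactor]]) auto
  then show ?thesis
    unfolding fG deg .
qed

end
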